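(* Consider the system on $\mathbb{R}^2$ \[ \dot x_1=-g_1(t)x_1+g(t)x_1^m-h_1(t)x_2^3,\qquad \dot x_2=h_2(t)x_1-g_2(t)x_2+\tilde g(t)x_2^n-b(t)x_1^2x_2+d(t), \] where $g,\tilde g\in C(\mathbb{R}_{\geq0};\mathbb{R}_{\geq0})$, $b\in C(\mathbb{R}_{\geq0};\mathbb{R}_{>0})$, $h_1\in C^1(\mathbb{R}_{\geq0};\mathbb{R}_{\geq0})$ satisfies $0\leq h_1(t)\leq M$ and $h_1'(t)\leq h_1(t)$ for all $t\geq0$ with a constant $M>0$, $m>3$ and $n>1$ are integers, $g_1,g_2,h_2\in C(\mathbb{R}_{\geq0};\mathbb{R}_{\geq0})$ satisfy $g_1(t)\geq\max\{g(t),\tilde g(t)\}$ for all $t\geq0$, $\lim_{t\to\infty}\int_0^t g_1(\tau)\,\mathrm{d}\tau=+\infty$, $g_2(t)\geq 1+g_1(t)$ and $h_2(t)=\frac{h_1(t)}{1+h_1(t)}$ for all $t\geq0$, and the disturbance $d$ satisfies $d\in L^4(0,T)$ for every $T>0$. Then this system is LiISS: there exist $R>0$, $\gamma_0,\gamma\in\mathcal{K}$, $\sigma_0,\sigma\in\mathcal{K}_\infty$, $\beta\in\mathcal{KL}$ such that for every initial state $x(0)=x_0\in\mathbb{R}^2$ and disturbance $d$ with $|x_0|+\sigma_0\big(\int_0^t\gamma_0(|d(s)|)\,\mathrm{d}s\big)\leq R$ for all $t>0$, the solution $x=(x_1,x_2)^\top$ satisfies \[ |x(t)|\leq\beta(|x_0|,t)+\sigma\Big(\int_0^t\gamma(|d(s)|)\,\mathrm{d}s\Big),\quad\forall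 t\geq0. \]
   Context: $|\cdot|$ is the Euclidean norm on $\mathbb{R}^2$. $\mathcal{K}$ = continuous strictly increasing $\gamma:\mathbb{R}_{\geq0}\to\mathbb{R}_{\geq0}$ with $\gamma(0)=0$; $\mathcal{K}_\infty$ = unbounded elements of $\mathcal{K}$; $\mathcal{KL}$ = continuous $\beta:\mathbb{R}_{\geq0}^2\to\mathbb{R}_{\geq0}$ with $\beta(\cdot,t)\in\mathcal{K}$ for each $t\geq0$ and $\beta(r,\cdot)$ continuous, strictly decreasing and tending to $0$ for each $r>0$. *)

theory Defs
  imports "HOL-Analysis.Analysis"
begin

definition class_K :: "(real \<Rightarrow> real) \<Rightarrow> bool" where
  "class_K \<gamma> \<longleftrightarrow> continuous_on {0..} \<gamma> \<and> strict_mono_on {0..} \<gamma> \<and> \<gamma> 0 = 0"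

definition class_Kinf :: "(real \<Rightarrow> real) \<Rightarrow> bool" where
  "class_Kinf \<gamma> \<longleftrightarrow> class_K \<gamma> \<and> (\<forall>M. \<exists>r\<ge>0. \<gamma> r > M)"

definition class_KL :: "(real \<Rightarrow> real \<Rightarrow> real) \<Rightarrow> bool" where
  "class_KL \<beta> \<longleftrightarrow>
     continuous_on ({0..} \<times> {0..}) (\<lambda>(r, t). \<beta> r t) \<and>
     (\<forall>t\<ge>0. class_K (\<lambda>r. \<beta> r t)) \<and>
     (\<forall>r>0. continuous_on {0..} (\<beta> r) \<and>
            (\<forall>s t. 0 \<le> s \<longrightarrow> s < t \<longrightarrow> \<beta> r t < \<beta> r s) \<and>
            (\<beta> r \<longlongrightarrow> 0) at_top)"

text \<open>Caratheodory solution on [0,T] of x' = F(t,x), x(0) = x0, in integral form,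
  componentwise on R^2 (represented as real \<times> real; its norm is the Euclidean norm).\<close>

definition car_solution ::
  "(real \<Rightarrow> real \<times> real \<Rightarrow> real \<times> real) \<Rightarrow> real \<times> real \<Rightarrow> real \<Rightarrow> (real \<Rightarrow> real \<times> real) \<Rightarrow> bool" where
  "car_solution F x0 T x \<longleftrightarrow>
     continuous_on {0..T} x \<and> x 0 = x0 \<and>
     (\<forall>t\<in>{0..T}.
        set_integrable lborel {0..t} (\<lambda>s. fst (F s (x s))) \<and>
        set_integrable lborel {0..t} (\<lambda>s. snd (F s (x s))) \<and>
        fst (x t) = fst x0 + (LINT s:{0..t}|lborel. fst (F s (x s))) \<and>
        snd (x t) = snd x0 + (LINT s:{0..t}|lborel. snd (F s (x s))))"

end

theory Submission
  imports Defs
begin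

(*
  Let V t x1 x2 = x1^2/2 + (1 + h1 t) x2^4/4 and G t = integral of g1 over [0, t].  While a
  solution stays in the box |x1|, |x2| <= 1/2, the choice h2 = h1 / (1 + h1) cancels the cross
  terms x1 x2^3, the higher powers x1^(m+1) and x2^(n+3) are absorbed by the damping g1 and
  g2 >= 1 + g1, h1' <= h1 takes care of the time dependence of V, and Young's inequality
  x2^3 d <= (3 x2^4 + d^4)/4 leaves  d/dt (exp G * V) <= exp G * (1 + M)/4 * d^4.  Integrating,
  V t <= exp (- G t) V 0 + (1 + M)/4 * integral d^4, and |x| <= 2 V^(1/4) in the box gives the
  LiISS estimate with gamma = gamma0 = r^4.  A continuity argument shows that solutions with
  small |x0| + sigma (integral d^4) never reach the boundary of the box.

  Solutions are only Caratheodory, so differentiating exp G * V along them requires a chain rule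
  for functions given as indefinite Lebesgue integrals.
*)

section \<open>A chain rule for indefinite integrals\<close>

lemma dist_Pair_le_add: "dist (a, b) (a', b') \<le> dist a a' + dist b b'"
  unfolding dist_Pair_Pair by (rule sqrt_sum_squares_le_sum) auto

lemma dist_triple_coordinates:
  fixes a1 a2 a3 b1 b2 b3 :: real
  assumes "dist (a1, a2, a3) (b1, b2, b3) < e"
  shows "\<bar>a1 - b1\<bar> < e" "\<bar>a2 - b2\<bar> < e" "\<bar>a3 - b3\<bar> < e"
  using le_less_trans[OF dist_fst_le assms]
    le_less_trans[OF dist_fst_le le_less_trans[OF dist_snd_le assms]]
    le_less_trans[OF dist_snd_le le_less_trans[OF dist_snd_le assms]]
  by (simp_all add: dist_real_def)

lemma real_mvt_closed_segment:
  fixes f f' :: "real \<Rightarrow> real"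
  assumes "\<And>x. (f has_real_derivative f' x) (at x)"
  obtains \<xi> where "\<xi> \<in> closed_segment a b" "f b - f a = f' \<xi> * (b - a)"
proof -
  have mvt: "\<exists>\<xi>\<in>{u..v}. f v - f u = f' \<xi> * (v - u)" if "u \<le> v" for u v
    by (rule mvt_very_simple[OF that])
      (use assms in \<open>auto simp: has_field_derivative_def intro: has_derivative_at_withinI\<close>)
  show ?thesis
  proof (cases "a \<le> b")
    case True
    then show ?thesis using mvt[OF True] that by (auto simp: closed_segment_eq_real_ivl)
  next
    case False
    then obtain \<xi> where "\<xi> \<in> {b..a}" "f a - f b = f' \<xi> * (a - b)" using mvt[of b a] by auto
    then show ?thesis
      using that[of \<xi>] False by (auto simp: closed_segment_eq_real_ivl algebra_simps)
  qed
qed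

lemma increment_by_partial_derivatives:
  fixes F Ft Fy Fz :: "real \<Rightarrow> real \<Rightarrow> real \<Rightarrow> real"
  assumes "s \<le> t"
    and Ft: "\<And>\<tau>. \<tau> \<in> {s..t} \<Longrightarrow> ((\<lambda>\<tau>. F \<tau> y' z') has_real_derivative Ft \<tau> y' z') (at \<tau> within {s..t})"
    and Fy: "\<And>\<eta>. ((\<lambda>\<eta>. F s \<eta> z') has_real_derivative Fy s \<eta> z') (at \<eta>)"
    and Fz: "\<And>\<zeta>. ((\<lambda>\<zeta>. F s y \<zeta>) has_real_derivative Fz s y \<zeta>) (at \<zeta>)"
  obtains \<tau> \<eta> \<zeta> where "\<tau> \<in> {s..t}" "\<eta> \<in> closed_segment y y'" "\<zeta> \<in> closed_segment z z'"
    "F t y' z' - F s y z = Ft \<tau> y' z' * (t - s) + Fy s \<eta> z' * (y' - y) + Fz s y \<zeta> * (z' - z)"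
proof -
  obtain \<tau> where \<tau>: "\<tau> \<in> {s..t}" "F t y' z' - F s y' z' = Ft \<tau> y' z' * (t - s)"
    using mvt_very_simple[OF \<open>s \<le> t\<close>, of "\<lambda>\<tau>. F \<tau> y' z'" "\<lambda>\<tau> h. Ft \<tau> y' z' * h"] Ft
    by (auto simp: has_field_derivative_def)
  obtain \<eta> where \<eta>: "\<eta> \<in> closed_segment y y'" "F s y' z' - F s y z' = Fy s \<eta> z' * (y' - y)"
    using real_mvt_closed_segment[OF Fy] .
  obtain \<zeta> where \<zeta>: "\<zeta> \<in> closed_segment z z'" "F s y z' - F s y z = Fz s y \<zeta> * (z' - z)"
    using real_mvt_closed_segment[OF Fz] .
  show ?thesis using that[OF \<tau>(1) \<eta>(1) \<zeta>(1)] \<tau>(2) \<eta>(2) \<zeta>(2) by argo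
qed

lemma eq_if_increments_dominated:
  fixes E \<mu> :: "real \<Rightarrow> real"
  assumes dom: "\<And>e. e > 0 \<Longrightarrow> \<exists>\<delta>>0. \<forall>s t. 0 \<le> s \<longrightarrow> s \<le> t \<longrightarrow> t \<le> T \<longrightarrow> t - s < \<delta>
        \<longrightarrow> \<bar>E t - E s\<bar> \<le> e * (\<mu> t - \<mu> s)"
    and mono: "mono_on {0..T} \<mu>" and t: "t \<in> {0..T}"
  shows "E t = E 0"
proof -
  have bound: "\<bar>E t - E 0\<bar> \<le> e * (\<mu> t - \<mu> 0)" if e: "e > 0" for e
  proof -
    obtain \<delta> where "\<delta> > 0" and \<delta>: "\<forall>s t. 0 \<le> s \<longrightarrow> s \<le> t \<longrightarrow> t \<le> T \<longrightarrow> t - s < \<delta>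
        \<longrightarrow> \<bar>E t - E s\<bar> \<le> e * (\<mu> t - \<mu> s)"
      using dom[OF e] by blast
    have "\<bar>E r - E 0\<bar> \<le> e * (\<mu> r - \<mu> 0)" if "r \<in> {0..T}" "r \<le> real k * (\<delta> / 2)" for k r
      using that
    proof (induction k arbitrary: r)
      case 0
      then show ?case by auto
    next
      case (Suc k)
      define s where "s = max 0 (r - \<delta> / 2)"
      have "s \<in> {0..T}" "s \<le> real k * (\<delta> / 2)" "s \<le> r" "r - s < \<delta>"
        using Suc.prems \<open>\<delta> > 0\<close> by (auto simp: s_def algebra_simps max_def)
      then have "\<bar>E s - E 0\<bar> \<le> e * (\<mu> s - \<mu> 0)" "\<bar>E r - E s\<bar> \<le> e * (\<mu> r - \<mu> s)"
        using Suc \<delta> by auto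
      then show ?case by (simp add: right_diff_distrib)
    qed
    moreover obtain k where "t / (\<delta> / 2) \<le> real k" using real_arch_simple by blast
    ultimately show ?thesis using t \<open>\<delta> > 0\<close> by (simp add: field_simps)
  qed
  have "\<bar>E t - E 0\<bar> \<le> 0 + \<epsilon>" if "\<epsilon> > 0" for \<epsilon>
  proof -
    have "\<mu> 0 \<le> \<mu> t" using mono t by (auto intro: mono_onD)
    then have "\<epsilon> / (\<mu> t - \<mu> 0 + 1) * (\<mu> t - \<mu> 0) \<le> \<epsilon>"
      using that by (simp add: field_simps)
    moreover have "\<epsilon> / (\<mu> t - \<mu> 0 + 1) > 0" using that \<open>\<mu> 0 \<le> \<mu> t\<close> by simp
    ultimately show ?thesis using bound by force
  qed
  then show ?thesis using field_le_epsilon[of "\<bar>E t - E 0\<bar>" 0] by simp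
qed

lemma uniformly_close_along_path:
  fixes P :: "real \<times> real \<times> real \<Rightarrow> 'a::metric_space" and y z :: "real \<Rightarrow> real"
  assumes P: "continuous_on ({0..T} \<times> UNIV) P"
    and y: "continuous_on {0..T} y" and z: "continuous_on {0..T} z" and "e > 0"
  obtains \<delta> where "\<delta> > 0"
    "\<And>s t r \<tau> \<eta> \<zeta>. 0 \<le> s \<Longrightarrow> s \<le> t \<Longrightarrow> t \<le> T \<Longrightarrow> t - s < \<delta> \<Longrightarrow> r \<in> {s..t} \<Longrightarrow> \<tau> \<in> {s..t} \<Longrightarrow>
      \<eta> \<in> closed_segment (y s) (y t) \<Longrightarrow> \<zeta> \<in> closed_segment (z s) (z t) \<Longrightarrow>
      dist (P (\<tau>, \<eta>, \<zeta>)) (P (r, y r, z r)) < e"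
proof -
  have between: "\<bar>\<xi> - c\<bar> < \<epsilon>" if "\<xi> \<in> closed_segment u v" "\<bar>u - c\<bar> < \<epsilon>" "\<bar>v - c\<bar> < \<epsilon>"
    for \<xi> u v c \<epsilon> :: real
    using that by (auto simp: closed_segment_eq_real_ivl split: if_splits)
  obtain B where B: "\<And>r. r \<in> {0..T} \<Longrightarrow> \<bar>y r\<bar> < B \<and> \<bar>z r\<bar> < B"
  proof -
    have "bounded (y ` {0..T})" "bounded (z ` {0..T})"
      using y z by (auto intro: compact_imp_bounded compact_continuous_image)
    then obtain By Bz where "\<forall>r\<in>{0..T}. \<bar>y r\<bar> \<le> By" "\<forall>r\<in>{0..T}. \<bar>z r\<bar> \<le> Bz"
      unfolding bounded_real by auto
    then show ?thesis using that[of "max By Bz + 1"] by fastforce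
  qed
  define box where "box = {0..T} \<times> ({-B..B} \<times> {-B..B})"
  have "uniformly_continuous_on box P"
    unfolding box_def
    by (intro compact_uniformly_continuous continuous_on_subset[OF P] compact_Times) auto
  then obtain \<eta>0 where "\<eta>0 > 0"
    and \<eta>0: "\<And>q q'. q \<in> box \<Longrightarrow> q' \<in> box \<Longrightarrow> dist q' q < \<eta>0 \<Longrightarrow> dist (P q') (P q) < e"
    unfolding uniformly_continuous_on_def using \<open>e > 0\<close> by metis
  have "uniformly_continuous_on {0..T} y" "uniformly_continuous_on {0..T} z"
    using y z by (auto intro: compact_uniformly_continuous)
  then obtain \<delta>y \<delta>z where "\<delta>y > 0" "\<delta>z > 0"
    and \<delta>y: "\<And>r r'. r \<in> {0..T} \<Longrightarrow> r' \<in> {0..T} \<Longrightarrow> \<bar>r' - r\<bar> < \<delta>y \<Longrightarrow> \<bar>y r' - y r\<bar> < \<eta>0 / 3"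
    and \<delta>z: "\<And>r r'. r \<in> {0..T} \<Longrightarrow> r' \<in> {0..T} \<Longrightarrow> \<bar>r' - r\<bar> < \<delta>z \<Longrightarrow> \<bar>z r' - z r\<bar> < \<eta>0 / 3"
    unfolding uniformly_continuous_on_def dist_real_def using \<open>\<eta>0 > 0\<close>
    by (metis divide_pos_pos zero_less_numeral)
  show ?thesis
  proof
    show "min (\<eta>0 / 3) (min \<delta>y \<delta>z) > 0" using \<open>\<eta>0 > 0\<close> \<open>\<delta>y > 0\<close> \<open>\<delta>z > 0\<close> by simp
    fix s t r \<tau> \<eta> \<zeta>
    assume st: "0 \<le> s" "s \<le> t" "t \<le> T" "t - s < min (\<eta>0 / 3) (min \<delta>y \<delta>z)" "r \<in> {s..t}" "\<tau> \<in> {s..t}"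
      and seg: "\<eta> \<in> closed_segment (y s) (y t)" "\<zeta> \<in> closed_segment (z s) (z t)"
    have "\<bar>\<eta> - y r\<bar> < \<eta>0 / 3" "\<bar>\<zeta> - z r\<bar> < \<eta>0 / 3"
      using st by (intro between[OF seg(1)] between[OF seg(2)] \<delta>y \<delta>z; simp)+
    moreover have "\<bar>\<tau> - r\<bar> < \<eta>0 / 3" using st by (auto simp: abs_if)
    ultimately have "dist (\<tau>, \<eta>, \<zeta>) (r, y r, z r) < \<eta>0"
      using dist_Pair_le_add[of \<tau> "(\<eta>, \<zeta>)" r "(y r, z r)"] dist_Pair_le_add[of \<eta> \<zeta> "y r" "z r"]
      by (simp add: dist_real_def)
    moreover have "\<bar>\<eta>\<bar> < B" "\<bar>\<zeta>\<bar> < B"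
      using between[OF seg(1), of 0 B] between[OF seg(2), of 0 B] B[of s] B[of t] st by auto
    ultimately show "dist (P (\<tau>, \<eta>, \<zeta>)) (P (r, y r, z r)) < e"
      using st B[of r] by (intro \<eta>0) (auto simp: box_def)
  qed
qed

lemma absolutely_integrable_continuous_mult:
  fixes q w :: "real \<Rightarrow> real"
  assumes "continuous_on {a..b} q" "w absolutely_integrable_on {a..b}"
  shows "(\<lambda>x. q x * w x) absolutely_integrable_on {a..b}"
proof (rule absolutely_integrable_bounded_measurable_product_real)
  show "q \<in> borel_measurable (lebesgue_on {a..b})"
    using assms(1) by (rule continuous_imp_measurable_on_sets_lebesgue) simp
  show "bounded (q ` {a..b})"
    using assms(1) by (intro compact_imp_bounded compact_continuous_image) auto
qed (use assms in auto)

lemma mult_integral_diff_integral_le: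
  fixes q w :: "real \<Rightarrow> real"
  assumes q: "continuous_on {s..t} q" and w: "w absolutely_integrable_on {s..t}"
    and close: "\<And>r. r \<in> {s..t} \<Longrightarrow> \<bar>p - q r\<bar> \<le> e"
  shows "\<bar>p * integral {s..t} w - integral {s..t} (\<lambda>r. q r * w r)\<bar>
    \<le> e * integral {s..t} (\<lambda>r. \<bar>w r\<bar>)"
proof -
  have w': "w integrable_on {s..t}" "(\<lambda>r. \<bar>w r\<bar>) integrable_on {s..t}"
    using w by (auto simp: absolutely_integrable_on_def)
  have qw: "(\<lambda>r. q r * w r) integrable_on {s..t}"
    using absolutely_integrable_continuous_mult[OF q w] by (simp add: absolutely_integrable_on_def)
  have "integral {s..t} (\<lambda>r. (p - q r) * w r) = integral {s..t} (\<lambda>r. p * w r - q r * w r)"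
    by (simp add: left_diff_distrib)
  also have "\<dots> = p * integral {s..t} w - integral {s..t} (\<lambda>r. q r * w r)"
    using w' qw by (subst integral_diff) (auto intro: integrable_on_mult_right)
  finally have "p * integral {s..t} w - integral {s..t} (\<lambda>r. q r * w r)
      = integral {s..t} (\<lambda>r. (p - q r) * w r)" ..
  also have "\<bar>\<dots>\<bar> \<le> integral {s..t} (\<lambda>r. e * \<bar>w r\<bar>)"
  proof (rule integral_norm_bound_integral[where 'a=real, unfolded real_norm_def])
    show "(\<lambda>r. (p - q r) * w r) integrable_on {s..t}"
      unfolding left_diff_distrib by (intro integrable_diff integrable_on_mult_right w' qw)
    show "(\<lambda>r. e * \<bar>w r\<bar>) integrable_on {s..t}" by (intro integrable_on_mult_right w')
    show "\<bar>(p - q r) * w r\<bar> \<le> e * \<bar>w r\<bar>" if "r \<in> {s..t}" for r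
      unfolding abs_mult using close[OF that] by (rule mult_right_mono) simp
  qed
  finally show ?thesis using w' by simp
qed

lemma integral_diff_initial_segments:
  fixes f :: "real \<Rightarrow> real"
  assumes "f integrable_on {0..T}" "0 \<le> s" "s \<le> t" "t \<le> T"
  shows "integral {0..t} f - integral {0..s} f = integral {s..t} f"
  using Henstock_Kurzweil_Integration.integral_combine[of 0 s t f]
    integrable_on_subinterval[OF assms(1)] assms
  by auto

locale integral_chain_rule =
  fixes T :: real and y z v w :: "real \<Rightarrow> real" and F Ft Fy Fz :: "real \<Rightarrow> real \<Rightarrow> real \<Rightarrow> real"
  assumes v: "v absolutely_integrable_on {0..T}" and w: "w absolutely_integrable_on {0..T}"
    and y_eq: "\<And>t. t \<in> {0..T} \<Longrightarrow> y t = y 0 + integral {0..t} v"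
    and z_eq: "\<And>t. t \<in> {0..T} \<Longrightarrow> z t = z 0 + integral {0..t} w"
    and Ft: "\<And>t \<eta> \<zeta>. t \<in> {0..T} \<Longrightarrow> ((\<lambda>t. F t \<eta> \<zeta>) has_real_derivative Ft t \<eta> \<zeta>) (at t within {0..T})"
    and Fy: "\<And>t \<eta> \<zeta>. t \<in> {0..T} \<Longrightarrow> ((\<lambda>\<eta>. F t \<eta> \<zeta>) has_real_derivative Fy t \<eta> \<zeta>) (at \<eta>)"
    and Fz: "\<And>t \<eta> \<zeta>. t \<in> {0..T} \<Longrightarrow> ((\<lambda>\<zeta>. F t \<eta> \<zeta>) has_real_derivative Fz t \<eta> \<zeta>) (at \<zeta>)"
    and partials_cont: "continuous_on ({0..T} \<times> UNIV) (\<lambda>(t, \<eta>, \<zeta>). (Ft t \<eta> \<zeta>, Fy t \<eta> \<zeta>, Fz t \<eta> \<zeta>))"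
begin

definition integrand :: "real \<Rightarrow> real" where
  "integrand s = Ft s (y s) (z s) + Fy s (y s) (z s) * v s + Fz s (y s) (z s) * w s"

(* Rather than differentiating almost everywhere, one shows that on short intervals the
   increments of the defect are small compared to those of the variation (defect_increment_le),
   which forces the defect to be constant. *)
definition defect :: "real \<Rightarrow> real" where
  "defect t = F t (y t) (z t) - integral {0..t} integrand"

definition variation :: "real \<Rightarrow> real" where
  "variation t = t + integral {0..t} (\<lambda>r. \<bar>v r\<bar>) + integral {0..t} (\<lambda>r. \<bar>w r\<bar>)"

lemma integrable_v_w:
  "v integrable_on {0..T}" "(\<lambda>s. \<bar>v s\<bar>) integrable_on {0..T}"
  "w integrable_on {0..T}" "(\<lambda>s. \<bar>w s\<bar>) integrable_on {0..T}"
  using v w by (auto simp: absolutely_integrable_on_def)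

lemma continuous_on_y: "continuous_on {0..T} y"
  by (rule continuous_on_eq[OF continuous_on_add[OF continuous_on_const
        indefinite_integral_continuous_1[OF integrable_v_w(1)]]]) (rule y_eq[symmetric])

lemma continuous_on_z: "continuous_on {0..T} z"
  by (rule continuous_on_eq[OF continuous_on_add[OF continuous_on_const
        indefinite_integral_continuous_1[OF integrable_v_w(3)]]]) (rule z_eq[symmetric])

lemma continuous_on_partials:
  "continuous_on {0..T} (\<lambda>s. Ft s (y s) (z s))"
  "continuous_on {0..T} (\<lambda>s. Fy s (y s) (z s))"
  "continuous_on {0..T} (\<lambda>s. Fz s (y s) (z s))"
proof -
  have "continuous_on {0..T} (\<lambda>s. (Ft s (y s) (z s), Fy s (y s) (z s), Fz s (y s) (z s)))"
    using continuous_on_compose2[OF partials_cont continuous_on_Pair[OF continuous_on_id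
          continuous_on_Pair[OF continuous_on_y continuous_on_z]]]
    by auto
  from continuous_on_fst[OF this] continuous_on_fst[OF continuous_on_snd[OF this]]
    continuous_on_snd[OF continuous_on_snd[OF this]]
  show "continuous_on {0..T} (\<lambda>s. Ft s (y s) (z s))" "continuous_on {0..T} (\<lambda>s. Fy s (y s) (z s))"
    "continuous_on {0..T} (\<lambda>s. Fz s (y s) (z s))" by simp_all
qed

lemma absolutely_integrable_terms:
  "(\<lambda>s. Ft s (y s) (z s)) absolutely_integrable_on {0..T}"
  "(\<lambda>s. Fy s (y s) (z s) * v s) absolutely_integrable_on {0..T}"
  "(\<lambda>s. Fz s (y s) (z s) * w s) absolutely_integrable_on {0..T}"
  by (intro absolutely_integrable_continuous_real absolutely_integrable_continuous_mult
      continuous_on_partials v w)+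

lemma integrable_integrand: "integrand integrable_on {0..T}"
  unfolding integrand_def[abs_def] using absolutely_integrable_terms
  by (intro integrable_add) (auto simp: absolutely_integrable_on_def)

lemma mono_on_variation: "mono_on {0..T} variation"
proof (rule mono_onI)
  fix s t assume "s \<in> {0..T}" "t \<in> {0..T}" "s \<le> t"
  then have mono: "integral {0..s} f \<le> integral {0..t} f"
    if "f integrable_on {0..T}" "\<And>r. 0 \<le> f r" for f :: "real \<Rightarrow> real"
    using that by (intro integral_subset_le integrable_on_subinterval[OF that(1)]) auto
  show "variation s \<le> variation t"
    using mono[OF integrable_v_w(2) abs_ge_zero] mono[OF integrable_v_w(4) abs_ge_zero] \<open>s \<le> t\<close>
    unfolding variation_def by linarith
qed

lemma defect_increment_le:
  assumes st: "0 \<le> s" "s \<le> t" "t \<le> T"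
    and close: "\<And>r \<tau> \<eta> \<zeta>. r \<in> {s..t} \<Longrightarrow> \<tau> \<in> {s..t} \<Longrightarrow>
      \<eta> \<in> closed_segment (y s) (y t) \<Longrightarrow> \<zeta> \<in> closed_segment (z s) (z t) \<Longrightarrow>
      dist (Ft \<tau> \<eta> \<zeta>, Fy \<tau> \<eta> \<zeta>, Fz \<tau> \<eta> \<zeta>)
        (Ft r (y r) (z r), Fy r (y r) (z r), Fz r (y r) (z r)) < e"
  shows "\<bar>defect t - defect s\<bar> \<le> e * (variation t - variation s)"
proof -
  have sT: "s \<in> {0..T}" and tT: "t \<in> {0..T}" using st by auto
  have sub: "f absolutely_integrable_on {s..t}"
    if "f absolutely_integrable_on {0..T}" for f :: "real \<Rightarrow> real"
    using absolutely_integrable_on_subinterval[OF that] st by auto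
  obtain \<tau> \<eta> \<zeta>
    where seg: "\<tau> \<in> {s..t}" "\<eta> \<in> closed_segment (y s) (y t)" "\<zeta> \<in> closed_segment (z s) (z t)"
    and incr: "F t (y t) (z t) - F s (y s) (z s) =
      Ft \<tau> (y t) (z t) * (t - s) + Fy s \<eta> (z t) * (y t - y s) + Fz s (y s) \<zeta> * (z t - z s)"
  proof (rule increment_by_partial_derivatives[OF \<open>s \<le> t\<close>, where Fy = Fy and Fz = Fz])
    show "((\<lambda>\<tau>. F \<tau> (y t) (z t)) has_real_derivative Ft \<tau> (y t) (z t)) (at \<tau> within {s..t})"
      if "\<tau> \<in> {s..t}" for \<tau>
      by (rule has_field_derivative_subset[OF Ft]) (use that st in auto)
  qed (use Fy[OF sT] Fz[OF sT] in auto)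
  have near: "\<bar>Ft \<tau> (y t) (z t) - Ft r (y r) (z r)\<bar> \<le> e" "\<bar>Fy s \<eta> (z t) - Fy r (y r) (z r)\<bar> \<le> e"
    "\<bar>Fz s (y s) \<zeta> - Fz r (y r) (z r)\<bar> \<le> e" if "r \<in> {s..t}" for r
    using dist_triple_coordinates[OF close] that seg st by (auto intro: less_imp_le)
  have "\<bar>Ft \<tau> (y t) (z t) * (t - s) - integral {s..t} (\<lambda>r. Ft r (y r) (z r))\<bar> \<le> e * (t - s)"
    using mult_integral_diff_integral_le[of s t "\<lambda>r. Ft r (y r) (z r)" "\<lambda>_. 1" "Ft \<tau> (y t) (z t)" e]
      continuous_on_subset[OF continuous_on_partials(1)] near(1) st by force
  moreover have "y t - y s = integral {s..t} v" "z t - z s = integral {s..t} w"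
    using y_eq[OF sT] y_eq[OF tT] z_eq[OF sT] z_eq[OF tT]
      integral_diff_initial_segments[OF integrable_v_w(1) st]
      integral_diff_initial_segments[OF integrable_v_w(3) st] by simp_all
  then have "\<bar>Fy s \<eta> (z t) * (y t - y s) - integral {s..t} (\<lambda>r. Fy r (y r) (z r) * v r)\<bar>
      \<le> e * integral {s..t} (\<lambda>r. \<bar>v r\<bar>)"
    and "\<bar>Fz s (y s) \<zeta> * (z t - z s) - integral {s..t} (\<lambda>r. Fz r (y r) (z r) * w r)\<bar>
      \<le> e * integral {s..t} (\<lambda>r. \<bar>w r\<bar>)"
    using near(2,3) st
    by (auto intro!: mult_integral_diff_integral_le sub v w
        continuous_on_subset[OF continuous_on_partials(2)]
        continuous_on_subset[OF continuous_on_partials(3)])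
  moreover have "integral {0..t} integrand - integral {0..s} integrand
      = integral {s..t} (\<lambda>r. Ft r (y r) (z r)) + integral {s..t} (\<lambda>r. Fy r (y r) (z r) * v r)
        + integral {s..t} (\<lambda>r. Fz r (y r) (z r) * w r)"
    using integral_diff_initial_segments[OF integrable_integrand st]
      sub[OF absolutely_integrable_terms(1)] sub[OF absolutely_integrable_terms(2)]
      sub[OF absolutely_integrable_terms(3)]
    by (simp add: integrand_def[abs_def] integral_add integrable_add absolutely_integrable_on_def)
  ultimately have "\<bar>defect t - defect s\<bar>
      \<le> e * (t - s) + e * integral {s..t} (\<lambda>r. \<bar>v r\<bar>) + e * integral {s..t} (\<lambda>r. \<bar>w r\<bar>)"
    using incr unfolding defect_def abs_le_iff by linarith
  moreover have "variation t - variation s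
      = (t - s) + integral {s..t} (\<lambda>r. \<bar>v r\<bar>) + integral {s..t} (\<lambda>r. \<bar>w r\<bar>)"
    using integral_diff_initial_segments[OF integrable_v_w(2) st]
      integral_diff_initial_segments[OF integrable_v_w(4) st]
    unfolding variation_def by simp
  ultimately show ?thesis by (simp add: distrib_left)
qed

lemma defect_constant:
  assumes "t \<in> {0..T}"
  shows "defect t = defect 0"
proof (rule eq_if_increments_dominated[OF _ mono_on_variation assms])
  fix e :: real assume "e > 0"
  from uniformly_close_along_path[OF partials_cont continuous_on_y continuous_on_z this]
  obtain \<delta> where "\<delta> > 0" and close: "\<And>s t r \<tau> \<eta> \<zeta>. 0 \<le> s \<Longrightarrow> s \<le> t \<Longrightarrow> t \<le> T \<Longrightarrow> t - s < \<delta> \<Longrightarrow>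
      r \<in> {s..t} \<Longrightarrow> \<tau> \<in> {s..t} \<Longrightarrow> \<eta> \<in> closed_segment (y s) (y t) \<Longrightarrow> \<zeta> \<in> closed_segment (z s) (z t) \<Longrightarrow>
      dist (Ft \<tau> \<eta> \<zeta>, Fy \<tau> \<eta> \<zeta>, Fz \<tau> \<eta> \<zeta>)
        (Ft r (y r) (z r), Fy r (y r) (z r), Fz r (y r) (z r)) < e"
    by auto
  then show "\<exists>\<delta>>0. \<forall>s t. 0 \<le> s \<longrightarrow> s \<le> t \<longrightarrow> t \<le> T \<longrightarrow> t - s < \<delta> \<longrightarrow>
      \<bar>defect t - defect s\<bar> \<le> e * (variation t - variation s)"
    by (blast intro: defect_increment_le)
qed

theorem has_integral:
  assumes "t \<in> {0..T}"
  shows "((\<lambda>s. Ft s (y s) (z s) + Fy s (y s) (z s) * v s + Fz s (y s) (z s) * w s)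
    has_integral F t (y t) (z t) - F 0 (y 0) (z 0)) {0..t}"
  using defect_constant[OF assms] integrable_on_subinterval[OF integrable_integrand] assms
  by (simp add: defect_def integrand_def[abs_def] has_integral_integrable_integral)

end

lemma set_integrable_imp_absolutely_integrable:
  fixes f :: "real \<Rightarrow> real"
  assumes "set_integrable lborel S f"
  shows "f absolutely_integrable_on S"
  using set_borel_integral_eq_integral(1)[OF assms]
    set_borel_integral_eq_integral(1)[OF set_integrable_norm[OF assms]]
  unfolding absolutely_integrable_on_def by auto

lemma car_solution_integral_form:
  assumes "car_solution F x0 T x" "t \<in> {0..T}"
  shows "(\<lambda>s. fst (F s (x s))) absolutely_integrable_on {0..t}"
    and "(\<lambda>s. snd (F s (x s))) absolutely_integrable_on {0..t}"
    and "fst (x t) = fst (x 0) + integral {0..t} (\<lambda>s. fst (F s (x s)))"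
    and "snd (x t) = snd (x 0) + integral {0..t} (\<lambda>s. snd (F s (x s)))"
proof -
  have 1: "set_integrable lborel {0..t} (\<lambda>s. fst (F s (x s)))"
    and 2: "set_integrable lborel {0..t} (\<lambda>s. snd (F s (x s)))"
    and "fst (x t) = fst (x 0) + (LINT s:{0..t}|lborel. fst (F s (x s)))"
    and "snd (x t) = snd (x 0) + (LINT s:{0..t}|lborel. snd (F s (x s)))"
    using assms unfolding car_solution_def by auto
  then show "fst (x t) = fst (x 0) + integral {0..t} (\<lambda>s. fst (F s (x s)))"
    and "snd (x t) = snd (x 0) + integral {0..t} (\<lambda>s. snd (F s (x s)))"
    using set_borel_integral_eq_integral(2)[OF 1] set_borel_integral_eq_integral(2)[OF 2]
    by simp_all
  show "(\<lambda>s. fst (F s (x s))) absolutely_integrable_on {0..t}"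
    and "(\<lambda>s. snd (F s (x s))) absolutely_integrable_on {0..t}"
    using 1 2 by (simp_all add: set_integrable_imp_absolutely_integrable)
qed

section \<open>Pointwise estimates\<close>

lemma cube_mult_le_Young: "(c::real) ^ 3 * d \<le> (3 * c ^ 4 + d ^ 4) / 4"
proof -
  have "3 * c ^ 4 + d ^ 4 - 4 * (c ^ 3 * d) = (c - d)\<^sup>2 * (2 * c\<^sup>2 + (c + d)\<^sup>2)"
    by (simp add: power2_eq_square power3_eq_cube power4_eq_xxxx algebra_simps)
  moreover have "(c - d)\<^sup>2 * (2 * c\<^sup>2 + (c + d)\<^sup>2) \<ge> 0" by simp
  ultimately have "0 \<le> 3 * c ^ 4 + d ^ 4 - 4 * (c ^ 3 * d)" by simp
  then show ?thesis by simp
qed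

lemma mult_power_le_half:
  fixes a c :: real
  assumes "\<bar>a\<bar> \<le> 1/2" "1 \<le> k" "0 \<le> c"
  shows "c * a ^ k \<le> c / 2"
proof -
  have "a ^ k \<le> \<bar>a\<bar> ^ k" by (metis abs_ge_self power_abs)
  also have "\<dots> \<le> \<bar>a\<bar> ^ 1" using assms by (intro power_decreasing) auto
  finally have "a ^ k \<le> 1/2" using assms by simp
  then show ?thesis using mult_left_mono[OF _ assms(3)] by fastforce
qed

lemma lyapunov_derivative_le:
  fixes g1 g gt b h1 h1' g2 h2 y z d M :: real and m n :: nat
  assumes g: "0 \<le> g" "g \<le> g1" and gt: "0 \<le> gt" "gt \<le> g1" and b: "0 \<le> b"
    and h1: "0 \<le> h1" "h1 \<le> M" "h1' \<le> h1" and g2: "1 + g1 \<le> g2" and h2: "h2 = h1 / (1 + h1)"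
    and y: "\<bar>y\<bar> \<le> 1/2" and z: "\<bar>z\<bar> \<le> 1/2" and m: "m > 3" and n: "n > 1"
  shows "g1 * (y\<^sup>2 / 2 + (1 + h1) * z ^ 4 / 4) + h1' * z ^ 4 / 4
      + y * (- g1 * y + g * y ^ m - h1 * z ^ 3)
      + (1 + h1) * z ^ 3 * (h2 * y - g2 * z + gt * z ^ n - b * y\<^sup>2 * z + d)
    \<le> (1 + M) / 4 * d ^ 4"
proof -
  define P where "P = 1 + h1"
  define Y where "Y = y\<^sup>2"
  define Z where "Z = z ^ 4"
  have P: "P \<ge> 1" and Y: "Y \<ge> 0" and Z: "Z \<ge> 0" using h1 by (simp_all add: P_def Y_def Z_def)
  \<comment> \<open>this is where h2 = h1 / (1 + h1) is needed: the cross terms y z^3 cancel\<close>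
  have cancel: "(P * h2 - h1) * (y * z ^ 3) = 0" using h1 by (simp add: P_def h2)
  have expand: "g1 * (y\<^sup>2 / 2 + (1 + h1) * z ^ 4 / 4) + h1' * z ^ 4 / 4
      + y * (- g1 * y + g * y ^ m - h1 * z ^ 3)
      + (1 + h1) * z ^ 3 * (h2 * y - g2 * z + gt * z ^ n - b * y\<^sup>2 * z + d)
     = - g1 * Y / 2 + g * (y * y ^ m) + P * g1 * Z / 4 + h1' * Z / 4 - P * g2 * Z
       + P * (gt * (z ^ 3 * z ^ n)) - P * b * Y * Z + P * (z ^ 3 * d) + (P * h2 - h1) * (y * z ^ 3)"
    unfolding P_def Y_def Z_def
    by (simp add: power2_eq_square power3_eq_cube power4_eq_xxxx algebra_simps)
  obtain k where k: "m = Suc k" "1 \<le> k" using m by (cases m) auto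
  then have "y * y ^ m \<le> Y / 2"
    using mult_power_le_half[OF y k(2) Y] by (simp add: Y_def power2_eq_square)
  then have g_term: "g * (y * y ^ m) \<le> g1 * Y / 2"
    using g Y mult_left_mono[of _ _ g] mult_right_mono[of g g1 "Y / 2"] by fastforce
  obtain l where l: "n = Suc l" "1 \<le> l" using n by (cases n) auto
  then have "z ^ 3 * z ^ n \<le> Z / 2"
    using mult_power_le_half[OF z l(2) Z] by (simp add: Z_def power3_eq_cube power4_eq_xxxx)
  then have "gt * (z ^ 3 * z ^ n) \<le> g1 * (Z / 2)"
    using gt Z mult_left_mono[of _ _ gt] mult_right_mono[of gt g1 "Z / 2"] by fastforce
  then have gt_term: "P * (gt * (z ^ 3 * z ^ n)) \<le> P * g1 * Z / 2"
    using P mult_left_mono[of _ _ P] by fastforce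
  have h1'_term: "h1' * Z \<le> P * Z" using h1 Z by (intro mult_right_mono) (auto simp: P_def)
  have "P * (1 + g1) * Z \<le> P * g2 * Z" using g2 P Z by (intro mult_right_mono mult_left_mono) auto
  then have g2_term: "P * Z + P * g1 * Z \<le> P * g2 * Z" by (simp add: algebra_simps)
  have b_term: "0 \<le> P * b * Y * Z" using P b Y Z by simp
  have "P * (z ^ 3 * d) \<le> P * ((3 * Z + d ^ 4) / 4)"
    unfolding Z_def using P by (intro mult_left_mono cube_mult_le_Young) auto
  then have d_term: "P * (z ^ 3 * d) \<le> 3 * (P * Z) / 4 + P * d ^ 4 / 4" by (simp add: algebra_simps)
  have P_le: "P * d ^ 4 \<le> (1 + M) * d ^ 4" using h1 by (intro mult_right_mono) (auto simp: P_def)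
  have "0 \<le> P * g1 * Z" and K_eq: "(1 + M) / 4 * d ^ 4 = (1 + M) * d ^ 4 / 4"
    using P g Z by simp_all
  then show ?thesis
    unfolding expand cancel K_eq
    using g_term gt_term h1'_term g2_term b_term d_term P_le by linarith
qed

lemma abs_components_le_norm:
  fixes p :: "real \<times> real"
  shows "\<bar>fst p\<bar> \<le> norm p" "\<bar>snd p\<bar> \<le> norm p"
  using norm_fst_le[of "fst p" "snd p"] norm_snd_le[of "snd p" "fst p"] by simp_all

lemma norm_le_lyapunov:
  fixes y z h :: real
  assumes y: "\<bar>y\<bar> \<le> 1/2" and h: "0 \<le> h"
  shows "norm (y, z) \<le> 2 * sqrt (sqrt (y\<^sup>2 / 2 + (1 + h) * z ^ 4 / 4))"
proof -
  have "y ^ 4 \<le> y\<^sup>2 / 4"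
  proof -
    have "y\<^sup>2 \<le> (1/2)\<^sup>2" using y by (metis abs_ge_zero power2_abs power_mono)
    then have "y\<^sup>2 * y\<^sup>2 \<le> y\<^sup>2 * (1/4)" by (intro mult_left_mono) (auto simp: power2_eq_square)
    then show ?thesis by (simp add: power2_eq_square power4_eq_xxxx)
  qed
  moreover have "(y\<^sup>2 + z\<^sup>2)\<^sup>2 \<le> 2 * y ^ 4 + 2 * z ^ 4"
    using sum_squares_ge_zero[of "y\<^sup>2 - z\<^sup>2" 0]
    by (simp add: power2_eq_square power4_eq_xxxx algebra_simps)
  moreover have "0 \<le> h * z ^ 4" "0 \<le> y\<^sup>2" "0 \<le> z ^ 4" using h by simp_all
  ultimately have "(y\<^sup>2 + z\<^sup>2)\<^sup>2 \<le> 8 * y\<^sup>2 + 4 * z ^ 4 + 4 * (h * z ^ 4)" by linarith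
  also have "\<dots> = 4\<^sup>2 * (y\<^sup>2 / 2 + (1 + h) * z ^ 4 / 4)" by (simp add: algebra_simps)
  finally have "(y\<^sup>2 + z\<^sup>2)\<^sup>2 \<le> 4\<^sup>2 * (y\<^sup>2 / 2 + (1 + h) * z ^ 4 / 4)" .
  then have "sqrt ((y\<^sup>2 + z\<^sup>2)\<^sup>2) \<le> sqrt (4\<^sup>2 * (y\<^sup>2 / 2 + (1 + h) * z ^ 4 / 4))"
    by (rule real_sqrt_le_mono)
  then have "y\<^sup>2 + z\<^sup>2 \<le> 4 * sqrt (y\<^sup>2 / 2 + (1 + h) * z ^ 4 / 4)"
    unfolding real_sqrt_mult real_sqrt_abs by simp
  then have "sqrt (y\<^sup>2 + z\<^sup>2) \<le> sqrt (2\<^sup>2 * sqrt (y\<^sup>2 / 2 + (1 + h) * z ^ 4 / 4))"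
    by (simp add: real_sqrt_le_mono)
  then show ?thesis by (simp add: norm_Pair real_sqrt_mult)
qed

lemma sqrt_sqrt_add_le:
  fixes a b :: real
  assumes "0 \<le> a" "0 \<le> b"
  shows "sqrt (sqrt (a + b)) \<le> sqrt (sqrt a) + sqrt (sqrt b)"
proof -
  have "sqrt (sqrt (a + b)) \<le> sqrt (sqrt a + sqrt b)"
    using sqrt_add_le_add_sqrt[OF assms] by simp
  also have "\<dots> \<le> sqrt (sqrt a) + sqrt (sqrt b)"
    by (intro sqrt_add_le_add_sqrt) (use assms in auto)
  finally show ?thesis .
qed

lemma bootstrap_less:
  fixes f :: "real \<Rightarrow> real"
  assumes cont: "continuous_on {0..T} f" and start: "f 0 < \<rho>"
    and step: "\<And>t. t \<in> {0..T} \<Longrightarrow> (\<And>s. s \<in> {0..t} \<Longrightarrow> f s \<le> \<rho>) \<Longrightarrow> f t < \<rho>"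
    and t: "t \<in> {0..T}"
  shows "f t < \<rho>"
proof (rule ccontr)
  assume "\<not> f t < \<rho>"
  define S where "S = {0..T} \<inter> f -` {\<rho>..}"
  have "S \<noteq> {}" "bdd_below S" using t \<open>\<not> f t < \<rho>\<close> by (auto simp: S_def)
  moreover have "closed S" unfolding S_def by (intro continuous_closed_preimage cont) auto
  ultimately have "Inf S \<in> S" by (rule closed_contains_Inf)
  then have t1: "0 \<le> Inf S" "Inf S \<le> T" "\<rho> \<le> f (Inf S)" by (auto simp: S_def)
  have below: "f s < \<rho>" if "0 \<le> s" "s < Inf S" for s
    using cInf_lower[OF _ \<open>bdd_below S\<close>, of s] that t1 by (force simp: S_def)
  obtain s where "0 \<le> s" "s \<le> Inf S" "f s = \<rho>"
    using IVT'[of f 0 \<rho> "Inf S"] start t1 continuous_on_subset[OF cont] by force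
  then have "f (Inf S) \<le> \<rho>" using below by force
  moreover have "f s \<le> \<rho>" if "s \<in> {0..Inf S}" for s
    using below[of s] \<open>f (Inf S) \<le> \<rho>\<close> that by (cases "s = Inf S") auto
  ultimately show False using step[of "Inf S"] t1 by fastforce
qed

lemma class_K_power: "0 < k \<Longrightarrow> class_K (\<lambda>r. r ^ k)"
  unfolding class_K_def strict_mono_on_def
  by (auto intro!: continuous_intros power_strict_mono)

section \<open>The Lyapunov argument\<close>

locale liiss_system =
  fixes g gt b h1 h1' g1 g2 h2 :: "real \<Rightarrow> real" and M :: real and m n :: nat
  assumes g_bounds: "\<And>t. 0 \<le> t \<Longrightarrow> 0 \<le> g t \<and> g t \<le> g1 t"
    and gt_bounds: "\<And>t. 0 \<le> t \<Longrightarrow> 0 \<le> gt t \<and> gt t \<le> g1 t"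
    and b_nonneg: "\<And>t. 0 \<le> t \<Longrightarrow> 0 \<le> b t"
    and h1_deriv: "\<And>t. 0 \<le> t \<Longrightarrow> (h1 has_real_derivative h1' t) (at t within {0..})"
    and h1'_cont: "continuous_on {0..} h1'"
    and h1_bounds: "\<And>t. 0 \<le> t \<Longrightarrow> 0 \<le> h1 t \<and> h1 t \<le> M"
    and h1'_le: "\<And>t. 0 \<le> t \<Longrightarrow> h1' t \<le> h1 t"
    and m_gt: "m > 3" and n_gt: "n > 1"
    and g1_cont: "continuous_on {0..} g1"
    and g1_integral: "filterlim (\<lambda>t. integral {0..t} g1) at_top at_top"
    and g2_ge: "\<And>t. 0 \<le> t \<Longrightarrow> 1 + g1 t \<le> g2 t"
    and h2_eq: "\<And>t. 0 \<le> t \<Longrightarrow> h2 t = h1 t / (1 + h1 t)"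
begin

definition vector_field :: "(real \<Rightarrow> real) \<Rightarrow> real \<Rightarrow> real \<times> real \<Rightarrow> real \<times> real" where
  "vector_field d = (\<lambda>s (x1, x2). (- g1 s * x1 + g s * x1 ^ m - h1 s * x2 ^ 3,
                                   h2 s * x1 - g2 s * x2 + gt s * x2 ^ n - b s * x1\<^sup>2 * x2 + d s))"

definition G :: "real \<Rightarrow> real" where
  "G t = integral {0..t} g1"

definition V :: "real \<Rightarrow> real \<Rightarrow> real \<Rightarrow> real" where
  "V t y z = y\<^sup>2 / 2 + (1 + h1 t) * z ^ 4 / 4"

definition K :: real where
  "K = (1 + M) / 4"

definition W :: "real \<Rightarrow> real" where
  "W r = r\<^sup>2 / 2 + (1 + M) * r ^ 4 / 4"

(* The term exp (- t) keeps beta strictly decreasing in t where g1 vanishes. *)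
definition beta :: "real \<Rightarrow> real \<Rightarrow> real" where
  "beta r t = 2 * sqrt (sqrt ((exp (- G t) + exp (- t)) * W r))"

definition sigma :: "real \<Rightarrow> real" where
  "sigma s = 2 * sqrt (sqrt (K * s))"

(* Small enough that beta r t <= 1/4 and sigma <= 1/128 when norm x0 + sigma (...) <= radius,
   so that solutions never leave the box |x| < 1/2 where lyapunov_derivative_le applies. *)
definition radius :: real where
  "radius = 1 / (128 * (1 + M))"

lemma M_nonneg: "0 \<le> M"
  using h1_bounds[of 0] by simp

lemma g1_nonneg: "0 \<le> t \<Longrightarrow> 0 \<le> g1 t"
  using g_bounds[of t] by simp

lemma G_has_derivative: "s \<in> {0..t} \<Longrightarrow> (G has_real_derivative g1 s) (at s within {0..t})"
  unfolding G_def by (intro integral_has_real_derivative continuous_on_subset[OF g1_cont]) auto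

lemma G_mono: "0 \<le> s \<Longrightarrow> s \<le> t \<Longrightarrow> G s \<le> G t"
  unfolding G_def using g1_nonneg
  by (intro integral_subset_le integrable_continuous_interval continuous_on_subset[OF g1_cont]) auto

lemma G_nonneg: "0 \<le> t \<Longrightarrow> 0 \<le> G t"
  using G_mono[of 0 t] by (simp add: G_def)

lemma continuous_on_G: "continuous_on {0..} G"
proof (rule DERIV_continuous_on)
  fix t :: real assume "t \<in> {0..}"
  then have "(G has_real_derivative g1 t) (at t within {0..t + 1})" by (intro G_has_derivative) auto
  moreover have "at t within {0..t + 1} = at t within {0..}"
    by (rule at_within_nhd[of _ "{..<t + 1}"]) (use \<open>t \<in> {0..}\<close> in auto)
  ultimately show "(G has_real_derivative g1 t) (at t within {0..})" by simp
qed

lemma vector_field_components: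
  "fst (vector_field d s p) = - g1 s * fst p + g s * fst p ^ m - h1 s * snd p ^ 3"
  "snd (vector_field d s p)
    = h2 s * fst p - g2 s * snd p + gt s * snd p ^ n - b s * (fst p)\<^sup>2 * snd p + d s"
  by (simp_all add: vector_field_def split_beta)

lemma lyapunov_chain_rule:
  assumes "0 \<le> t"
    and v: "v absolutely_integrable_on {0..t}" and w: "w absolutely_integrable_on {0..t}"
    and y_eq: "\<And>s. s \<in> {0..t} \<Longrightarrow> y s = y 0 + integral {0..s} v"
    and z_eq: "\<And>s. s \<in> {0..t} \<Longrightarrow> z s = z 0 + integral {0..s} w"
  shows "((\<lambda>s. exp (G s) * (g1 s * V s (y s) (z s) + h1' s * z s ^ 4 / 4
      + y s * v s + (1 + h1 s) * z s ^ 3 * w s))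
    has_integral exp (G t) * V t (y t) (z t) - V 0 (y 0) (z 0)) {0..t}"
proof -
  have h1_deriv': "(h1 has_real_derivative h1' \<tau>) (at \<tau> within {0..t})" if "\<tau> \<in> {0..t}" for \<tau>
    using h1_deriv[of \<tau>] that by (auto intro: has_field_derivative_subset)
  have cont: "continuous_on ({0..t} \<times> (UNIV :: (real \<times> real) set)) (\<lambda>p. f (fst p))"
    if "continuous_on {0..} f" for f :: "real \<Rightarrow> real"
    by (rule continuous_on_compose2[OF that continuous_on_fst[OF continuous_on_id]]) auto
  have h1_cont: "continuous_on {0..} h1"
    using h1_deriv by (intro DERIV_continuous_on) auto
  interpret integral_chain_rule t y z v w "\<lambda>\<tau> \<eta> \<zeta>. exp (G \<tau>) * V \<tau> \<eta> \<zeta>"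
    "\<lambda>\<tau> \<eta> \<zeta>. exp (G \<tau>) * (g1 \<tau> * V \<tau> \<eta> \<zeta> + h1' \<tau> * \<zeta> ^ 4 / 4)"
    "\<lambda>\<tau> \<eta> \<zeta>. exp (G \<tau>) * \<eta>" "\<lambda>\<tau> \<eta> \<zeta>. exp (G \<tau>) * ((1 + h1 \<tau>) * \<zeta> ^ 3)"
  proof
    show "((\<lambda>\<tau>. exp (G \<tau>) * V \<tau> \<eta> \<zeta>) has_real_derivative
        exp (G \<tau>) * (g1 \<tau> * V \<tau> \<eta> \<zeta> + h1' \<tau> * \<zeta> ^ 4 / 4)) (at \<tau> within {0..t})"
      if "\<tau> \<in> {0..t}" for \<tau> \<eta> \<zeta>
    proof -
      have "((\<lambda>\<tau>. exp (G \<tau>)) has_real_derivative exp (G \<tau>) * g1 \<tau>) (at \<tau> within {0..t})"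
        using G_has_derivative[OF that] by (auto intro!: derivative_eq_intros)
      moreover have "((\<lambda>\<tau>. V \<tau> \<eta> \<zeta>) has_real_derivative h1' \<tau> * \<zeta> ^ 4 / 4) (at \<tau> within {0..t})"
        unfolding V_def by (auto intro!: derivative_eq_intros h1_deriv'[OF that])
      ultimately show ?thesis by (rule DERIV_mult[THEN DERIV_cong]) (simp add: algebra_simps)
    qed
    show "((\<lambda>\<eta>. exp (G \<tau>) * V \<tau> \<eta> \<zeta>) has_real_derivative exp (G \<tau>) * \<eta>) (at \<eta>)" for \<tau> \<eta> \<zeta>
      unfolding V_def by (auto intro!: derivative_eq_intros)
    show "((\<lambda>\<zeta>. exp (G \<tau>) * V \<tau> \<eta> \<zeta>) has_real_derivative
        exp (G \<tau>) * ((1 + h1 \<tau>) * \<zeta> ^ 3)) (at \<zeta>)" for \<tau> \<eta> \<zeta>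
      unfolding V_def by (auto intro!: derivative_eq_intros simp: algebra_simps)
    show "continuous_on ({0..t} \<times> UNIV) (\<lambda>(\<tau>, \<eta>, \<zeta>).
        (exp (G \<tau>) * (g1 \<tau> * V \<tau> \<eta> \<zeta> + h1' \<tau> * \<zeta> ^ 4 / 4),
         exp (G \<tau>) * \<eta>, exp (G \<tau>) * ((1 + h1 \<tau>) * \<zeta> ^ 3)))"
      unfolding V_def case_prod_beta'
      by (intro continuous_intros cont[OF continuous_on_G] cont[OF g1_cont] cont[OF h1_cont]
          cont[OF h1'_cont]) auto
  qed (fact v w y_eq z_eq)+
  have "exp (G s) * (g1 s * V s (y s) (z s) + h1' s * z s ^ 4 / 4) + exp (G s) * y s * v s
      + exp (G s) * ((1 + h1 s) * z s ^ 3) * w s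
    = exp (G s) * (g1 s * V s (y s) (z s) + h1' s * z s ^ 4 / 4
        + y s * v s + (1 + h1 s) * z s ^ 3 * w s)"
    for s by (simp add: algebra_simps)
  then show ?thesis
    using has_integral[of t] \<open>0 \<le> t\<close> by (simp add: G_def)
qed

lemma lyapunov_estimate:
  assumes sol: "car_solution (vector_field d) x0 T x" and t: "t \<in> {0..T}"
    and d4: "(\<lambda>s. d s ^ 4) integrable_on {0..t}"
    and small: "\<And>s. s \<in> {0..t} \<Longrightarrow> norm (x s) \<le> 1/2"
  shows "exp (G t) * V t (fst (x t)) (snd (x t))
    \<le> V 0 (fst (x 0)) (snd (x 0)) + exp (G t) * (K * integral {0..t} (\<lambda>s. d s ^ 4))"
proof -
  define y where "y = (\<lambda>s. fst (x s))"
  define z where "z = (\<lambda>s. snd (x s))"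
  define v where "v = (\<lambda>s. fst (vector_field d s (x s)))"
  define w where "w = (\<lambda>s. snd (vector_field d s (x s)))"
  have sT: "s \<in> {0..T}" if "s \<in> {0..t}" for s using that t by auto
  have "((\<lambda>s. exp (G s) * (g1 s * V s (y s) (z s) + h1' s * z s ^ 4 / 4
      + y s * v s + (1 + h1 s) * z s ^ 3 * w s))
    has_integral exp (G t) * V t (y t) (z t) - V 0 (y 0) (z 0)) {0..t}"
  proof (rule lyapunov_chain_rule)
    show "v absolutely_integrable_on {0..t}" "w absolutely_integrable_on {0..t}"
      using car_solution_integral_form(1,2)[OF sol t] unfolding v_def w_def by auto
    show "y s = y 0 + integral {0..s} v" "z s = z 0 + integral {0..s} w" if "s \<in> {0..t}" for s
      using car_solution_integral_form(3,4)[OF sol sT[OF that]]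
      unfolding y_def z_def v_def w_def by auto
  qed (use t in auto)
  moreover have "((\<lambda>s. exp (G t) * (K * d s ^ 4))
      has_integral exp (G t) * (K * integral {0..t} (\<lambda>s. d s ^ 4))) {0..t}"
    using d4 by (intro has_integral_mult_right integrable_integral)
  moreover have "exp (G s) * (g1 s * V s (y s) (z s) + h1' s * z s ^ 4 / 4
      + y s * v s + (1 + h1 s) * z s ^ 3 * w s) \<le> exp (G t) * (K * d s ^ 4)"
    if s: "s \<in> {0..t}" for s
  proof -
    have "exp (G s) * (g1 s * V s (y s) (z s) + h1' s * z s ^ 4 / 4
        + y s * v s + (1 + h1 s) * z s ^ 3 * w s) \<le> exp (G s) * (K * d s ^ 4)"
      unfolding V_def y_def z_def v_def w_def vector_field_components K_def
    proof (intro mult_left_mono lyapunov_derivative_le)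
      show "\<bar>fst (x s)\<bar> \<le> 1/2" "\<bar>snd (x s)\<bar> \<le> 1/2"
        using small[OF s] abs_components_le_norm[of "x s"] by auto
    qed (use s g_bounds gt_bounds b_nonneg h1_bounds h1'_le g2_ge h2_eq m_gt n_gt in auto)
    also have "\<dots> \<le> exp (G t) * (K * d s ^ 4)"
      using G_mono[of s t] s M_nonneg by (intro mult_right_mono) (auto simp: K_def)
    finally show ?thesis .
  qed
  ultimately have "exp (G t) * V t (y t) (z t) - V 0 (y 0) (z 0)
      \<le> exp (G t) * (K * integral {0..t} (\<lambda>s. d s ^ 4))"
    by (rule has_integral_le)
  then show ?thesis by (simp add: y_def z_def)
qed

lemma V_le_W: "0 \<le> t \<Longrightarrow> V t (fst p) (snd p) \<le> W (norm p)"
proof -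
  assume "0 \<le> t"
  have "(fst p)\<^sup>2 \<le> (norm p)\<^sup>2" "snd p ^ 4 \<le> norm p ^ 4"
    using power_mono[OF abs_components_le_norm(1)[of p] abs_ge_zero, of 2]
      power_mono[OF abs_components_le_norm(2)[of p] abs_ge_zero, of 4] by simp_all
  moreover have "(1 + h1 t) * snd p ^ 4 \<le> (1 + M) * norm p ^ 4"
    using h1_bounds[OF \<open>0 \<le> t\<close>] calculation(2) M_nonneg by (intro mult_mono) auto
  ultimately show ?thesis unfolding V_def W_def by linarith
qed

lemma W_le_square:
  assumes "0 \<le> r" "(1 + M) * r\<^sup>2 \<le> 2"
  shows "W r \<le> r\<^sup>2"
proof -
  have "(1 + M) * r ^ 4 = ((1 + M) * r\<^sup>2) * r\<^sup>2" by (simp add: power2_eq_square power4_eq_xxxx)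
  also have "\<dots> \<le> 2 * r\<^sup>2" using assms by (intro mult_right_mono) auto
  finally show ?thesis unfolding W_def by linarith
qed

lemma class_K_W: "class_K W"
  unfolding class_K_def
proof (intro conjI strict_mono_onI)
  fix r s :: real assume "r \<in> {0..}" "s \<in> {0..}" "r < s"
  then have "r\<^sup>2 < s\<^sup>2" "(1 + M) * r ^ 4 \<le> (1 + M) * s ^ 4"
    using M_nonneg by (auto intro!: power_strict_mono mult_left_mono power_mono)
  then show "W r < W s" unfolding W_def by linarith
qed (auto simp: W_def intro!: continuous_intros)

lemma W_mono: "0 \<le> r \<Longrightarrow> r \<le> s \<Longrightarrow> W r \<le> W s"
  using class_K_W strict_mono_on_leD[of "{0..}" W r s] unfolding class_K_def by auto

lemma sigma_mono: "0 \<le> r \<Longrightarrow> r \<le> s \<Longrightarrow> sigma r \<le> sigma s"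
  using M_nonneg by (simp add: sigma_def K_def mult_left_mono)

lemma sigma_nonneg: "0 \<le> s \<Longrightarrow> 0 \<le> sigma s"
  using sigma_mono[of 0 s] by (simp add: sigma_def)

lemma class_Kinf_sigma: "class_Kinf sigma"
  unfolding class_Kinf_def class_K_def
proof (intro conjI allI strict_mono_onI)
  have K: "K > 0" using M_nonneg by (simp add: K_def)
  show "continuous_on {0..} sigma" unfolding sigma_def by (intro continuous_intros)
  show "sigma r < sigma s" if "r \<in> {0..}" "s \<in> {0..}" "r < s" for r s
    using K that by (simp add: sigma_def)
  show "sigma 0 = 0" by (simp add: sigma_def)
  fix B :: real
  have "sqrt ((\<bar>B\<bar> + 1) ^ 4) = (\<bar>B\<bar> + 1)\<^sup>2"
    by (rule real_sqrt_unique) (simp_all add: power2_eq_square power4_eq_xxxx)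
  then have "sigma ((\<bar>B\<bar> + 1) ^ 4 / K) = 2 * (\<bar>B\<bar> + 1)"
    using K by (simp add: sigma_def)
  then show "\<exists>r\<ge>0. B < sigma r"
    using K by (intro exI[of _ "(\<bar>B\<bar> + 1) ^ 4 / K"]) auto
qed

lemma class_KL_beta: "class_KL beta"
  unfolding class_KL_def
proof (intro conjI allI impI)
  have W_cont: "continuous_on {0..} W" and W_strict: "strict_mono_on {0..} W" and "W 0 = 0"
    using class_K_W unfolding class_K_def by auto
  have cG: "continuous_on ({0..} \<times> {0..}) (\<lambda>p. G (snd p))"
    by (rule continuous_on_compose2[OF continuous_on_G continuous_on_snd[OF continuous_on_id]]) auto
  have cW: "continuous_on ({0..} \<times> {0..}) (\<lambda>p. W (fst p))"
    by (rule continuous_on_compose2[OF W_cont continuous_on_fst[OF continuous_on_id]]) auto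
  show "continuous_on ({0..} \<times> {0..}) (\<lambda>(r, t). beta r t)"
    unfolding beta_def case_prod_beta' by (intro continuous_intros cG cW)
  fix t :: real assume "0 \<le> t"
  have c: "0 < exp (- G t) + exp (- t)" by (simp add: add_pos_pos)
  show "class_K (\<lambda>r. beta r t)"
    unfolding class_K_def
  proof (intro conjI strict_mono_onI)
    show "continuous_on {0..} (\<lambda>r. beta r t)"
      unfolding beta_def by (intro continuous_intros W_cont)
    show "beta r t < beta s t" if "r \<in> {0..}" "s \<in> {0..}" "r < s" for r s
      using strict_mono_onD[OF W_strict that] c by (simp add: beta_def)
    show "beta 0 t = 0" using \<open>W 0 = 0\<close> by (simp add: beta_def)
  qed
next
  fix r :: real assume "r > 0"
  then have W: "0 < W r"
    using class_K_W strict_mono_onD[of "{0..}" W 0 r] unfolding class_K_def by auto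
  show "continuous_on {0..} (beta r)"
    unfolding beta_def by (intro continuous_intros continuous_on_G)
  show "beta r t < beta r s" if "0 \<le> s" "s < t" for s t
  proof -
    have "exp (- G t) + exp (- t) < exp (- G s) + exp (- s)"
      using G_mono[of s t] that by (intro add_le_less_mono) auto
    then show ?thesis using W by (simp add: beta_def)
  qed
  have "((\<lambda>t. exp (- G t)) \<longlongrightarrow> 0) at_top"
    using g1_integral unfolding G_def[abs_def]
    by (intro filterlim_compose[OF exp_at_bot]) (simp add: filterlim_uminus_at_bot)
  moreover have "((\<lambda>t::real. exp (- t)) \<longlongrightarrow> 0) at_top"
    by (intro filterlim_compose[OF exp_at_bot]) (simp add: filterlim_uminus_at_bot filterlim_ident)
  ultimately have "((\<lambda>t. 2 * sqrt (sqrt ((exp (- G t) + exp (- t)) * W r)))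
      \<longlongrightarrow> 2 * sqrt (sqrt ((0 + 0) * W r))) at_top"
    by (intro tendsto_intros)
  then show "(beta r \<longlongrightarrow> 0) at_top" by (simp add: beta_def[abs_def])
qed

lemma radius_bounds: "0 < radius" "radius \<le> 1/128" "(1 + M) * radius \<le> 1/128"
  using M_nonneg by (auto simp: radius_def field_simps)

lemma beta_le_quarter:
  assumes "0 \<le> r" "r \<le> radius" "0 \<le> t"
  shows "beta r t \<le> 1/4"
proof -
  have "r * r \<le> radius * 1" using assms radius_bounds by (intro mult_mono) auto
  then have "(1 + M) * r\<^sup>2 \<le> (1 + M) * radius"
    using M_nonneg by (simp add: power2_eq_square mult_left_mono)
  then have "W r \<le> r\<^sup>2" using assms radius_bounds by (intro W_le_square) auto
  also have "\<dots> \<le> (1/128)\<^sup>2" using assms radius_bounds by (intro power_mono) auto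
  finally have Wr: "W r \<le> (1/128)\<^sup>2" .
  have "exp (- G t) \<le> 1" "exp (- t) \<le> 1" using G_nonneg assms by auto
  then have "exp (- G t) + exp (- t) \<le> 2" by linarith
  moreover have "0 \<le> W r" using W_mono[of 0 r] assms by (simp add: W_def)
  ultimately have "(exp (- G t) + exp (- t)) * W r \<le> 2 * (1/128)\<^sup>2"
    using Wr by (intro mult_mono) auto
  also have "\<dots> \<le> ((1/8)\<^sup>2)\<^sup>2" by (simp add: power2_eq_square)
  finally have "sqrt ((exp (- G t) + exp (- t)) * W r) \<le> sqrt (((1/8)\<^sup>2)\<^sup>2)"
    by (rule real_sqrt_le_mono)
  then have "sqrt ((exp (- G t) + exp (- t)) * W r) \<le> (1/8)\<^sup>2"
    by (simp only: real_sqrt_abs abs_power2)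
  then have "sqrt (sqrt ((exp (- G t) + exp (- t)) * W r)) \<le> sqrt ((1/8)\<^sup>2)"
    by (rule real_sqrt_le_mono)
  then show ?thesis by (simp add: beta_def)
qed

lemma norm_estimate:
  assumes sol: "car_solution (vector_field d) x0 T x" and t: "t \<in> {0..T}"
    and d4: "(\<lambda>s. d s ^ 4) integrable_on {0..t}"
    and small: "\<And>s. s \<in> {0..t} \<Longrightarrow> norm (x s) \<le> 1/2"
  shows "norm (x t) \<le> beta (norm x0) t + sigma (integral {0..t} (\<lambda>s. d s ^ 4))"
proof -
  define D where "D = integral {0..t} (\<lambda>s. d s ^ 4)"
  define \<psi> where "\<psi> = exp (- G t) + exp (- t)"
  have "0 \<le> D" using d4 by (simp add: D_def integral_nonneg)
  then have KD: "0 \<le> K * D" using M_nonneg by (simp add: K_def)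
  have "x 0 = x0" using sol by (simp add: car_solution_def)
  have V0: "0 \<le> V 0 (fst x0) (snd x0)" using h1_bounds[of 0] by (simp add: V_def)
  have "exp (G t) * V t (fst (x t)) (snd (x t)) \<le> V 0 (fst x0) (snd x0) + exp (G t) * (K * D)"
    using lyapunov_estimate[OF sol t d4 small] \<open>x 0 = x0\<close> by (simp add: D_def)
  then have "V t (fst (x t)) (snd (x t)) \<le> exp (- G t) * V 0 (fst x0) (snd x0) + K * D"
    by (simp add: exp_minus field_simps)
  also have "\<dots> \<le> \<psi> * W (norm x0) + K * D"
    using V_le_W[of 0 x0] V0 by (auto simp: \<psi>_def intro!: mult_mono)
  finally have V_bound: "V t (fst (x t)) (snd (x t)) \<le> \<psi> * W (norm x0) + K * D" .
  have "norm (x t) = norm (fst (x t), snd (x t))" by simp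
  also have "\<dots> \<le> 2 * sqrt (sqrt (V t (fst (x t)) (snd (x t))))"
    unfolding V_def using small[of t] t abs_components_le_norm[of "x t"] h1_bounds[of t]
    by (intro norm_le_lyapunov) auto
  also have "\<dots> \<le> 2 * sqrt (sqrt (\<psi> * W (norm x0) + K * D))"
    using V_bound by simp
  also have "\<dots> \<le> 2 * (sqrt (sqrt (\<psi> * W (norm x0))) + sqrt (sqrt (K * D)))"
  proof -
    have "0 \<le> \<psi> * W (norm x0)"
      using W_mono[of 0 "norm x0"] by (simp add: \<psi>_def W_def add_pos_pos)
    then show ?thesis by (intro mult_left_mono sqrt_sqrt_add_le KD) auto
  qed
  finally show ?thesis by (simp add: beta_def sigma_def \<psi>_def D_def)
qed

lemma solution_estimate:
  assumes sol: "car_solution (vector_field d) x0 T x" and d4: "(\<lambda>s. d s ^ 4) integrable_on {0..T}"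
    and small: "norm x0 + sigma (integral {0..T} (\<lambda>s. d s ^ 4)) \<le> radius" and t: "t \<in> {0..T}"
  shows "norm (x t) \<le> beta (norm x0) t + sigma (integral {0..t} (\<lambda>s. d s ^ 4))"
proof -
  have d4': "(\<lambda>s. d s ^ 4) integrable_on {0..u}" if "u \<in> {0..T}" for u
    using integrable_on_subinterval[OF d4] that by auto
  have D_le: "integral {0..u} (\<lambda>s. d s ^ 4) \<le> integral {0..T} (\<lambda>s. d s ^ 4)"
      "0 \<le> integral {0..u} (\<lambda>s. d s ^ 4)"
    if "u \<in> {0..T}" for u
    using that d4 d4'[OF that] by (auto intro!: integral_subset_le integral_nonneg)
  have x0: "norm x0 \<le> radius" "x 0 = x0"
    using small sigma_nonneg[OF D_le(2)[of T]] t sol by (auto simp: car_solution_def)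
  have "norm (x u) < 1/2" if "u \<in> {0..T}" for u
  proof (rule bootstrap_less[OF _ _ _ that])
    show "continuous_on {0..T} (\<lambda>s. norm (x s))"
      using sol unfolding car_solution_def by (auto intro: continuous_intros)
    show "norm (x 0) < 1/2" using x0 radius_bounds by simp
    fix u assume u: "u \<in> {0..T}" and "\<And>s. s \<in> {0..u} \<Longrightarrow> norm (x s) \<le> 1/2"
    then have "norm (x u) \<le> beta (norm x0) u + sigma (integral {0..u} (\<lambda>s. d s ^ 4))"
      using u by (intro norm_estimate[OF sol u d4'[OF u]]) auto
    also have "beta (norm x0) u \<le> 1/4" using x0 u by (intro beta_le_quarter) auto
    also have "sigma (integral {0..u} (\<lambda>s. d s ^ 4)) \<le> radius"
      using sigma_mono[OF D_le(2,1)[OF u]] small norm_ge_zero[of x0] by linarith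
    finally show "norm (x u) < 1/2" using radius_bounds by simp
  qed
  then show ?thesis
    using t by (intro norm_estimate[OF sol t d4'[OF t]]) (auto intro: less_imp_le)
qed

end

theorem proposition4p1:
  fixes g gt b h1 h1' g1 g2 h2 :: "real \<Rightarrow> real" and M :: real and m n :: nat
  assumes g_cont: "continuous_on {0..} g" and g_nn: "\<forall>t\<ge>0. g t \<ge> 0"
    and gt_cont: "continuous_on {0..} gt" and gt_nn: "\<forall>t\<ge>0. gt t \<ge> 0"
    and b_cont: "continuous_on {0..} b" and b_pos: "\<forall>t\<ge>0. b t > 0"
    and h1_deriv: "\<forall>t\<ge>0. (h1 has_real_derivative h1' t) (at t within {0..})"
    and h1'_cont: "continuous_on {0..} h1'"
    and M_pos: "M > 0" and h1_bnd: "\<forall>t\<ge>0. 0 \<le> h1 t \<and> h1 t \<le> M"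
    and h1'_le: "\<forall>t\<ge>0. h1' t \<le> h1 t"
    and m_gt: "m > 3" and n_gt: "n > 1"
    and g1_cont: "continuous_on {0..} g1" and g1_nn: "\<forall>t\<ge>0. g1 t \<ge> 0"
    and g2_cont: "continuous_on {0..} g2" and g2_nn: "\<forall>t\<ge>0. g2 t \<ge> 0"
    and h2_cont: "continuous_on {0..} h2" and h2_nn: "\<forall>t\<ge>0. h2 t \<ge> 0"
    and g1_ge: "\<forall>t\<ge>0. g1 t \<ge> max (g t) (gt t)"
    and g1_int: "filterlim (\<lambda>t. integral {0..t} g1) at_top at_top"
    and g2_ge: "\<forall>t\<ge>0. g2 t \<ge> 1 + g1 t"
    and h2_eq: "\<forall>t\<ge>0. h2 t = h1 t / (1 + h1 t)"
  shows "\<exists>R \<gamma>0 \<gamma> \<sigma>0 \<sigma> \<beta>. R > 0 \<and> class_K \<gamma>0 \<and> class_K \<gamma> \<and> class_Kinf \<sigma>0 \<and> class_Kinf \<sigma> \<and> class_KL \<beta> \<and>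
    (\<forall>(x0 :: real \<times> real) (d :: real \<Rightarrow> real).
       (\<forall>T>0. set_borel_measurable lborel {0..T} d \<and> set_integrable lborel {0..T} (\<lambda>s. (d s) ^ 4)) \<longrightarrow>
       (\<forall>t>0. set_integrable lborel {0..t} (\<lambda>s. \<gamma>0 \<bar>d s\<bar>) \<and>
              norm x0 + \<sigma>0 (LINT s:{0..t}|lborel. \<gamma>0 \<bar>d s\<bar>) \<le> R) \<longrightarrow>
       (\<forall>T>0. \<forall>x. car_solution
            (\<lambda>s (x1, x2). (- g1 s * x1 + g s * x1 ^ m - h1 s * x2 ^ 3,
                           h2 s * x1 - g2 s * x2 + gt s * x2 ^ n - b s * x1\<^sup>2 * x2 + d s))
            x0 T x \<longrightarrow>
          (\<forall>t\<in>{0..T}. set_integrable lborel {0..t} (\<lambda>s. \<gamma> \<bar>d s\<bar>) \<longrightarrow>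
             norm (x t) \<le> \<beta> (norm x0) t + \<sigma> (LINT s:{0..t}|lborel. \<gamma> \<bar>d s\<bar>))))"
proof -
  interpret liiss_system g gt b h1 h1' g1 g2 h2 M m n
    using g_nn gt_nn b_pos h1_deriv h1'_cont h1_bnd h1'_le m_gt n_gt g1_cont g1_ge g1_int g2_ge
      h2_eq
    by unfold_locales (auto simp: less_imp_le)
  have LINT_eq: "(LINT s:{0..u}|lborel. \<bar>d s\<bar> ^ 4) = integral {0..u} (\<lambda>s. d s ^ 4)"
    if "set_integrable lborel {0..u} (\<lambda>s. \<bar>d s\<bar> ^ 4)" for d :: "real \<Rightarrow> real" and u
    using set_borel_integral_eq_integral(2)[OF that] by simp
  have main: "norm (x t) \<le> beta (norm x0) t + sigma (LINT s:{0..t}|lborel. \<bar>d s\<bar> ^ 4)"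
    if d: "\<forall>T>0. set_borel_measurable lborel {0..T} d \<and> set_integrable lborel {0..T} (\<lambda>s. d s ^ 4)"
      and small: "\<forall>t>0. set_integrable lborel {0..t} (\<lambda>s. \<bar>d s\<bar> ^ 4) \<and>
        norm x0 + sigma (LINT s:{0..t}|lborel. \<bar>d s\<bar> ^ 4) \<le> radius"
      and "T > 0" and sol: "car_solution (\<lambda>s (x1, x2). (- g1 s * x1 + g s * x1 ^ m - h1 s * x2 ^ 3,
        h2 s * x1 - g2 s * x2 + gt s * x2 ^ n - b s * x1\<^sup>2 * x2 + d s)) x0 T x"
      and "t \<in> {0..T}" and "set_integrable lborel {0..t} (\<lambda>s. \<bar>d s\<bar> ^ 4)"
    for x0 d T x t
  proof -
    have "(\<lambda>s. d s ^ 4) integrable_on {0..T}"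
      using d \<open>T > 0\<close> set_borel_integral_eq_integral(1) by blast
    moreover have "norm x0 + sigma (integral {0..T} (\<lambda>s. d s ^ 4)) \<le> radius"
      using small \<open>T > 0\<close> LINT_eq by auto
    ultimately show ?thesis
      using solution_estimate[OF sol[folded vector_field_def]] LINT_eq that by simp
  qed
  show ?thesis
    by (rule exI[of _ radius], rule exI[of _ "\<lambda>r. r ^ 4"], rule exI[of _ "\<lambda>r. r ^ 4"],
        rule exI[of _ sigma], rule exI[of _ sigma], rule exI[of _ beta])
      (use main radius_bounds(1) class_K_power[of 4] class_Kinf_sigma class_KL_beta in auto)
qed

end
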